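(* Let $K\subset\mathbb{R}$ be a real biquadratic bicyclic number field with quadratic subfields $k_1,k_2,k_3$, whose fundamental units $\varepsilon_i>1$ all satisfy $N_{k_i/\mathbb{Q}}(\varepsilon_i)=-1$. Let $\eta=\varepsilon_1\varepsilon_2\varepsilon_3$. Then $\mathbb{Q}(\eta)=K$, the extension $\mathbb{Q}(\sqrt{\eta})/\mathbb{Q}$ is Galois and its Galois group has exponent $2$. Moreover, there exists $r\in\mathbb{Q}\setminus\{0\}$ such that $K(\sqrt{\eta})=K(\sqrt r)$, and, setting $\rho=\sqrt{r\eta}$, one has $\rho\in K$ and $\eta=\rho^2/r$. *)

theory Defs
  imports "HOL-Analysis.Analysis" "HOL-Computational_Algebra.Polynomial"
begin

definition subfield :: "complex set \<Rightarrow> bool" where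
  "subfield F \<longleftrightarrow> 0 \<in> F \<and> 1 \<in> F \<and>
     (\<forall>x\<in>F. \<forall>y\<in>F. x + y \<in> F \<and> x * y \<in> F) \<and>
     (\<forall>x\<in>F. - x \<in> F) \<and> (\<forall>x\<in>F. x \<noteq> 0 \<longrightarrow> inverse x \<in> F)"

definition gen_field :: "complex set \<Rightarrow> complex set" where
  "gen_field S = \<Inter>{F. subfield F \<and> S \<subseteq> F}"

text \<open>Field embeddings F -> C (ring homomorphisms; they automatically fix Q).\<close>
definition field_emb :: "complex set \<Rightarrow> (complex \<Rightarrow> complex) \<Rightarrow> bool" where
  "field_emb F \<sigma> \<longleftrightarrow> \<sigma> 1 = 1 \<and>
     (\<forall>x\<in>F. \<forall>y\<in>F. \<sigma> (x + y) = \<sigma> x + \<sigma> y \<and> \<sigma> (x * y) = \<sigma> x * \<sigma> y)"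

definition embs :: "complex set \<Rightarrow> (complex \<Rightarrow> complex) set" where
  "embs F = (\<lambda>\<sigma>. restrict \<sigma> F) ` {\<sigma>. field_emb F \<sigma>}"

definition field_norm :: "complex set \<Rightarrow> complex \<Rightarrow> complex" where
  "field_norm F x = (\<Prod>\<sigma>\<in>embs F. \<sigma> x)"

definition galois :: "complex set \<Rightarrow> bool" where
  "galois F \<longleftrightarrow> subfield F \<and> finite (embs F) \<and> (\<forall>\<sigma>. field_emb F \<sigma> \<longrightarrow> \<sigma> ` F \<subseteq> F)"

definition gal :: "complex set \<Rightarrow> (complex \<Rightarrow> complex) set" where
  "gal F = {\<sigma> \<in> embs F. \<sigma> ` F = F}"

definition gal_exponent_two :: "complex set \<Rightarrow> bool" where
  "gal_exponent_two F \<longleftrightarrow> (\<forall>\<sigma>\<in>gal F. \<forall>x\<in>F. \<sigma> (\<sigma> x) = x) \<and> (\<exists>\<sigma>\<in>gal F. \<exists>x\<in>F. \<sigma> x \<noteq> x)"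

definition real_unit_of :: "complex set \<Rightarrow> real \<Rightarrow> bool" where
  "real_unit_of F u \<longleftrightarrow> complex_of_real u \<in> F \<and> algebraic_int u \<and> algebraic_int (1 / u)"

definition fundamental_unit :: "complex set \<Rightarrow> real \<Rightarrow> bool" where
  "fundamental_unit F \<epsilon> \<longleftrightarrow> \<epsilon> > 1 \<and> real_unit_of F \<epsilon> \<and>
     (\<forall>u. u > 1 \<and> real_unit_of F u \<longrightarrow> \<epsilon> \<le> u)"

end

theory Submission
  imports Defs
begin

text \<open>
  Write \<open>\<epsilon>\<^sub>i = x\<^sub>i + y\<^sub>i d\<^sub>i\<close> with \<open>d\<^sub>1 = \<surd>a\<close>, \<open>d\<^sub>2 = \<surd>b\<close>, \<open>d\<^sub>3 = \<surd>ab\<close> and rational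
  \<open>x\<^sub>i, y\<^sub>i\<close>; the norm condition reads \<open>x\<^sub>i\<^sup>2 - y\<^sub>i\<^sup>2 d\<^sub>i\<^sup>2 = -1\<close>. Expanding \<open>\<eta>\<close> in the basis
  \<open>1, \<surd>a, \<surd>b, \<surd>ab\<close>, the norm conditions prevent two of the three irrational coefficients from
  vanishing, and this forces \<open>\<surd>a, \<surd>b \<in> \<rat>(\<eta>)\<close>, so \<open>\<rat>(\<eta>) = K\<close>.

  Since \<open>\<epsilon>\<^sub>i \<epsilon>\<^sub>i' = -1\<close>, the element \<open>\<rho> = \<eta> + \<epsilon>\<^sub>1 + \<epsilon>\<^sub>2 - \<epsilon>\<^sub>3 \<in> K\<close> satisfies \<open>\<rho>\<^sup>2 = r \<eta>\<close> with
  \<open>r = 4 (x\<^sub>1 x\<^sub>2 x\<^sub>3 + ab y\<^sub>1 y\<^sub>2 y\<^sub>3 + x\<^sub>1 + x\<^sub>2 - x\<^sub>3)\<close> rational, and \<open>\<rho> > 0\<close> because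
  \<open>\<eta> > \<epsilon>\<^sub>3\<close>. Hence \<open>\<surd>\<eta> \<surd>r = \<rho>\<close>, so \<open>K(\<surd>\<eta>) = K(\<surd>r)\<close> and \<open>\<rat>(\<surd>\<eta>) = \<rat>(\<surd>a, \<surd>b, \<surd>r)\<close>.
  A field generated by square roots of rationals is Galois over \<open>\<rat>\<close>, each automorphism only
  changes the signs of the generators and so is an involution, and some automorphism is
  nontrivial as soon as one generator is irrational.
\<close>

section \<open>Subfields of the complex numbers\<close>

lemma subfield_zero: "subfield F \<Longrightarrow> 0 \<in> F"
  and subfield_one: "subfield F \<Longrightarrow> 1 \<in> F"
  and subfield_add: "subfield F \<Longrightarrow> x \<in> F \<Longrightarrow> y \<in> F \<Longrightarrow> x + y \<in> F"
  and subfield_mult: "subfield F \<Longrightarrow> x \<in> F \<Longrightarrow> y \<in> F \<Longrightarrow> x * y \<in> F"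
  and subfield_uminus: "subfield F \<Longrightarrow> x \<in> F \<Longrightarrow> - x \<in> F"
  by (simp_all add: subfield_def)

lemma subfield_inverse: "subfield F \<Longrightarrow> x \<in> F \<Longrightarrow> inverse x \<in> F"
  by (cases "x = 0") (auto simp: subfield_def)

lemma subfield_diff: "subfield F \<Longrightarrow> x \<in> F \<Longrightarrow> y \<in> F \<Longrightarrow> x - y \<in> F"
  using subfield_add[of F x "- y"] subfield_uminus by simp

lemma subfield_divide: "subfield F \<Longrightarrow> x \<in> F \<Longrightarrow> y \<in> F \<Longrightarrow> x / y \<in> F"
  using subfield_mult[of F x "inverse y"] subfield_inverse by (simp add: divide_inverse)

lemma subfield_power: "subfield F \<Longrightarrow> x \<in> F \<Longrightarrow> x ^ n \<in> F"
  by (induction n) (auto intro: subfield_mult subfield_one)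

lemma subfield_Rats_subset:
  assumes F: "subfield F"
  shows "\<rat> \<subseteq> F"
proof
  have "of_nat n \<in> F" for n
    by (induction n) (auto intro: subfield_add subfield_zero subfield_one F)
  then have "of_int n \<in> F" for n
    by (cases n) (auto intro!: subfield_diff subfield_uminus subfield_one F)
  then show "x \<in> F" if "x \<in> \<rat>" for x
    using that by (auto elim!: Rats_cases' intro: subfield_divide F)
qed

lemma subfield_Rats: "subfield \<rat>"
  by (auto simp: subfield_def)

lemma subfield_gen_field: "subfield (gen_field S)"
  unfolding gen_field_def subfield_def by auto

lemma gen_field_subset: "S \<subseteq> gen_field S"
  unfolding gen_field_def by auto

lemma gen_field_least: "subfield F \<Longrightarrow> S \<subseteq> F \<Longrightarrow> gen_field S \<subseteq> F"
  unfolding gen_field_def by auto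

lemma gen_field_mono: "S \<subseteq> T \<Longrightarrow> gen_field S \<subseteq> gen_field T"
  by (meson gen_field_least gen_field_subset subfield_gen_field order_trans)

lemma gen_field_empty: "gen_field {} = \<rat>"
  by (meson empty_subsetI gen_field_least subfield_Rats subfield_Rats_subset subfield_gen_field
      subset_antisym)

lemma gen_field_insert_gen_field: "gen_field (insert s (gen_field T)) = gen_field (insert s T)"
proof (rule subset_antisym)
  have "gen_field T \<subseteq> gen_field (insert s T)"
    by (rule gen_field_mono) blast
  then show "gen_field (insert s (gen_field T)) \<subseteq> gen_field (insert s T)"
    using gen_field_subset by (intro gen_field_least subfield_gen_field) blast
  show "gen_field (insert s T) \<subseteq> gen_field (insert s (gen_field T))"
    using gen_field_subset by (intro gen_field_mono) blast
qed

lemma gen_field_insert_power: "gen_field (insert w (gen_field {w ^ n})) = gen_field {w}"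
proof -
  have "w ^ n \<in> gen_field {w}"
    using gen_field_subset by (intro subfield_power subfield_gen_field) blast
  then have "gen_field {w, w ^ n} = gen_field {w}"
    using gen_field_subset
    by (intro subset_antisym gen_field_least subfield_gen_field gen_field_mono) blast+
  then show ?thesis
    by (simp add: gen_field_insert_gen_field)
qed

lemma gen_field_insert_eq_if_mult_mem:
  assumes K: "subfield K" and "w * t \<in> K" "w * t \<noteq> 0"
  shows "gen_field (insert w K) = gen_field (insert t K)"
proof -
  have sub: "gen_field (insert t K) \<subseteq> gen_field (insert w K)" if "w * t \<in> K" "w \<noteq> 0" for w t
  proof -
    have "w * t \<in> gen_field (insert w K)" "w \<in> gen_field (insert w K)"
      using that gen_field_subset by blast+
    then have "(w * t) / w \<in> gen_field (insert w K)"
      by (intro subfield_divide subfield_gen_field)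
    then show ?thesis
      using that gen_field_subset[of "insert w K"] by (intro gen_field_least subfield_gen_field) auto
  qed
  show ?thesis
    using sub[of w t] sub[of t w] assms by (auto simp: mult.commute)
qed

section \<open>Embeddings\<close>

context
  fixes F :: "complex set" and \<sigma> :: "complex \<Rightarrow> complex"
  assumes F: "subfield F" and \<sigma>: "field_emb F \<sigma>"
begin

lemma field_emb_add: "x \<in> F \<Longrightarrow> y \<in> F \<Longrightarrow> \<sigma> (x + y) = \<sigma> x + \<sigma> y"
  and field_emb_mult: "x \<in> F \<Longrightarrow> y \<in> F \<Longrightarrow> \<sigma> (x * y) = \<sigma> x * \<sigma> y"
  and field_emb_one: "\<sigma> 1 = 1"
  using \<sigma> by (simp_all add: field_emb_def)

lemma field_emb_zero: "\<sigma> 0 = 0"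
  using field_emb_add[of 0 0] subfield_zero[OF F] by simp

lemma field_emb_uminus: "x \<in> F \<Longrightarrow> \<sigma> (- x) = - \<sigma> x"
  using field_emb_add[of x "- x"] subfield_uminus[OF F, of x] field_emb_zero
  by (simp add: eq_neg_iff_add_eq_0 add.commute)

lemma field_emb_inverse: "x \<in> F \<Longrightarrow> \<sigma> (inverse x) = inverse (\<sigma> x)"
proof (cases "x = 0")
  case True
  then show ?thesis by (simp add: field_emb_zero)
next
  case False
  assume "x \<in> F"
  then have "\<sigma> (inverse x) * \<sigma> x = 1"
    using field_emb_mult[of "inverse x" x] False subfield_inverse[OF F] field_emb_one by simp
  then show ?thesis
    by (metis inverse_unique mult.commute)
qed

lemma field_emb_power: "x \<in> F \<Longrightarrow> \<sigma> (x ^ n) = \<sigma> x ^ n"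
  by (induction n) (auto simp: field_emb_one field_emb_mult subfield_power[OF F])

end

lemma field_emb_ident: "field_emb F (\<lambda>x. x)"
  by (simp add: field_emb_def)

lemma subfield_field_emb_equalizer:
  assumes F: "subfield F" and \<sigma>: "field_emb F \<sigma>" and \<tau>: "field_emb F \<tau>"
  shows "subfield {x \<in> F. \<sigma> x = \<tau> x}"
  using F unfolding subfield_def
  by (auto simp: field_emb_zero[OF F \<sigma>] field_emb_one[OF F \<sigma>] field_emb_add[OF F \<sigma>]
      field_emb_mult[OF F \<sigma>] field_emb_uminus[OF F \<sigma>] field_emb_inverse[OF F \<sigma>]
      field_emb_zero[OF F \<tau>] field_emb_one[OF F \<tau>] field_emb_add[OF F \<tau>]
      field_emb_mult[OF F \<tau>] field_emb_uminus[OF F \<tau>] field_emb_inverse[OF F \<tau>])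

lemma subfield_field_emb_preimage:
  assumes F: "subfield F" and \<sigma>: "field_emb F \<sigma>" and G: "subfield G"
  shows "subfield {x \<in> F. \<sigma> x \<in> G}"
  using F G unfolding subfield_def
  by (auto simp: field_emb_zero[OF F \<sigma>] field_emb_one[OF F \<sigma>] field_emb_add[OF F \<sigma>]
      field_emb_mult[OF F \<sigma>] field_emb_uminus[OF F \<sigma>] field_emb_inverse[OF F \<sigma>])

lemma field_emb_Rats:
  assumes F: "subfield F" and \<sigma>: "field_emb F \<sigma>" and x: "x \<in> \<rat>"
  shows "\<sigma> x = x"
  using subfield_Rats_subset[OF subfield_field_emb_equalizer[OF F \<sigma> field_emb_ident]] x by auto

lemma field_emb_sqrt_Rats:
  assumes F: "subfield F" and \<sigma>: "field_emb F \<sigma>" and s: "s \<in> F" "s\<^sup>2 \<in> \<rat>"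
  shows "\<sigma> s = s \<or> \<sigma> s = - s"
  using field_emb_power[OF F \<sigma> s(1), of 2] field_emb_Rats[OF F \<sigma> s(2)] power2_eq_iff[of "\<sigma> s" s]
  by auto

lemma field_emb_gen_field_eqI:
  assumes \<sigma>: "field_emb (gen_field S) \<sigma>" and \<tau>: "field_emb (gen_field S) \<tau>"
    and eq: "\<And>s. s \<in> S \<Longrightarrow> \<sigma> s = \<tau> s" and x: "x \<in> gen_field S"
  shows "\<sigma> x = \<tau> x"
proof -
  have "gen_field S \<subseteq> {x \<in> gen_field S. \<sigma> x = \<tau> x}"
    using eq gen_field_subset
    by (intro gen_field_least subfield_field_emb_equalizer[OF subfield_gen_field \<sigma> \<tau>]) blast
  then show ?thesis
    using x by blast
qed

section \<open>Quadratic extensions\<close>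

definition quad_conj :: "complex set \<Rightarrow> complex \<Rightarrow> complex \<Rightarrow> complex" where
  "quad_conj F s z = (THE w. \<exists>u\<in>F. \<exists>v\<in>F. z = u + v * s \<and> w = u - v * s)"

locale quadratic_extension =
  fixes F :: "complex set" and s :: complex
  assumes subfield_base: "subfield F" and square_mem: "s\<^sup>2 \<in> F" and not_mem: "s \<notin> F"
begin

lemma coords_unique:
  assumes "u \<in> F" "v \<in> F" "u' \<in> F" "v' \<in> F" and eq: "u + v * s = u' + v' * s"
  shows "u = u' \<and> v = v'"
proof -
  have "v = v'"
  proof (rule ccontr)
    assume "v \<noteq> v'"
    then have "s = (u' - u) / (v - v')"
      using eq by (simp add: field_simps)
    then show False
      using assms not_mem by (simp add: subfield_divide subfield_diff subfield_base)
  qed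
  then show ?thesis
    using eq by simp
qed

lemma quad_conj_coords:
  assumes "u \<in> F" "v \<in> F"
  shows "quad_conj F s (u + v * s) = u - v * s"
  unfolding quad_conj_def
proof (rule the_equality)
  show "\<exists>u'\<in>F. \<exists>v'\<in>F. u + v * s = u' + v' * s \<and> u - v * s = u' - v' * s"
    using assms by blast
  fix w
  assume "\<exists>u'\<in>F. \<exists>v'\<in>F. u + v * s = u' + v' * s \<and> w = u' - v' * s"
  then obtain u' v' where "u' \<in> F" "v' \<in> F" "u + v * s = u' + v' * s" "w = u' - v' * s"
    by blast
  then show "w = u - v * s"
    using coords_unique[OF assms] by simp
qed

lemma coords_norm_nonzero:
  assumes "u \<in> F" "v \<in> F" "u + v * s \<noteq> 0"
  shows "u\<^sup>2 - v\<^sup>2 * s\<^sup>2 \<noteq> 0"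
proof
  assume "u\<^sup>2 - v\<^sup>2 * s\<^sup>2 = 0"
  then have "(v * s)\<^sup>2 = u\<^sup>2"
    by (simp add: power_mult_distrib)
  then have pm: "v * s = u \<or> v * s = - u"
    by (simp add: power2_eq_iff)
  then have "v \<noteq> 0"
    using assms(3) by auto
  then have "s = u / v \<or> s = - u / v"
    using pm by (auto simp: field_simps)
  moreover have "u / v \<in> F" "- u / v \<in> F"
    using assms(1,2) subfield_base by (simp_all add: subfield_divide subfield_uminus)
  ultimately show False
    using not_mem by auto
qed

lemma inverse_coords:
  assumes "u \<in> F" "v \<in> F" "u + v * s \<noteq> 0"
  defines "n \<equiv> u\<^sup>2 - v\<^sup>2 * s\<^sup>2"
  shows "inverse (u + v * s) = u / n + (- v / n) * s"
proof -
  have "n \<noteq> 0"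
    unfolding n_def by (rule coords_norm_nonzero[OF assms(1-3)])
  moreover have "(u + v * s) * (u - v * s) = n"
    by (simp add: n_def algebra_simps power2_eq_square)
  ultimately have "(u + v * s) * ((u - v * s) / n) = 1"
    by simp
  then show ?thesis
    using \<open>n \<noteq> 0\<close> by (simp add: inverse_unique diff_divide_distrib)
qed

lemma subfield_coords: "subfield {u + v * s |u v. u \<in> F \<and> v \<in> F}"
proof -
  note F = subfield_base
  define L where "L = {u + v * s |u v. u \<in> F \<and> v \<in> F}"
  have mem: "u + v * s \<in> L" if "u \<in> F" "v \<in> F" for u v
    using that by (auto simp: L_def)
  have coords: "\<exists>u v. u \<in> F \<and> v \<in> F \<and> x = u + v * s" if "x \<in> L" for x
    using that by (auto simp: L_def)
  have ring_ops: "x + y \<in> L \<and> x * y \<in> L \<and> - x \<in> L" if xy: "x \<in> L" "y \<in> L" for x y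
  proof -
    obtain u v u' v' where uv: "u \<in> F" "v \<in> F" "u' \<in> F" "v' \<in> F"
      and x: "x = u + v * s" and y: "y = u' + v' * s"
      using coords[OF xy(1)] coords[OF xy(2)] by blast
    have "x + y = (u + u') + (v + v') * s"
      and "x * y = (u * u' + v * v' * s\<^sup>2) + (u * v' + v * u') * s"
      and "- x = (- u) + (- v) * s"
      unfolding x y by (simp_all add: algebra_simps power2_eq_square)
    moreover have "u + u' \<in> F" "v + v' \<in> F" "u * u' + v * v' * s\<^sup>2 \<in> F" "u * v' + v * u' \<in> F"
      "- u \<in> F" "- v \<in> F"
      using uv square_mem F by (simp_all add: subfield_add subfield_mult subfield_uminus)
    ultimately show ?thesis
      using mem by presburger
  qed
  have inverse: "inverse x \<in> L" if x: "x \<in> L" "x \<noteq> 0" for x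
  proof -
    obtain u v where uv: "u \<in> F" "v \<in> F" and x_eq: "x = u + v * s"
      using coords[OF x(1)] by blast
    have "u\<^sup>2 - v\<^sup>2 * s\<^sup>2 \<in> F"
      using uv square_mem F by (simp add: subfield_diff subfield_mult subfield_power)
    then have "u / (u\<^sup>2 - v\<^sup>2 * s\<^sup>2) \<in> F" "- v / (u\<^sup>2 - v\<^sup>2 * s\<^sup>2) \<in> F"
      using uv F by (simp_all add: subfield_divide subfield_uminus)
    then show ?thesis
      unfolding x_eq inverse_coords[OF uv x(2)[unfolded x_eq]] by (rule mem)
  qed
  have "0 \<in> L" "1 \<in> L"
    using mem[of 0 0] mem[of 1 0] by (simp_all add: subfield_zero subfield_one F)
  then have "subfield L"
    unfolding subfield_def using ring_ops inverse by blast
  then show ?thesis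
    by (simp add: L_def)
qed

lemma gen_field_insert_eq: "gen_field (insert s F) = {u + v * s |u v. u \<in> F \<and> v \<in> F}"
proof (rule subset_antisym)
  have "s = 0 + 1 * s" "\<And>u. u = u + 0 * s"
    by simp_all
  then show "gen_field (insert s F) \<subseteq> {u + v * s |u v. u \<in> F \<and> v \<in> F}"
    by (intro gen_field_least subfield_coords)
      (use subfield_zero subfield_one subfield_base in blast)
  have "insert s F \<subseteq> gen_field (insert s F)"
    by (rule gen_field_subset)
  then show "{u + v * s |u v. u \<in> F \<and> v \<in> F} \<subseteq> gen_field (insert s F)"
    by (auto intro!: subfield_add subfield_mult subfield_gen_field)
qed

lemma field_emb_quad_conj: "field_emb (gen_field (insert s F)) (quad_conj F s)"
  unfolding field_emb_def gen_field_insert_eq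
proof (intro conjI ballI)
  show "quad_conj F s 1 = 1"
    using quad_conj_coords[of 1 0] by (simp add: subfield_zero subfield_one subfield_base)
  fix x y
  assume "x \<in> {u + v * s |u v. u \<in> F \<and> v \<in> F}" "y \<in> {u + v * s |u v. u \<in> F \<and> v \<in> F}"
  then obtain u v u' v' where uv: "u \<in> F" "v \<in> F" "u' \<in> F" "v' \<in> F"
    and x: "x = u + v * s" and y: "y = u' + v' * s"
    by blast
  have sum: "x + y = (u + u') + (v + v') * s"
    and prod: "x * y = (u * u' + v * v' * s\<^sup>2) + (u * v' + v * u') * s"
    unfolding x y by (simp_all add: algebra_simps power2_eq_square)
  have "quad_conj F s (x + y) = (u + u') - (v + v') * s"
    unfolding sum using uv by (intro quad_conj_coords subfield_add subfield_base)
  moreover have "quad_conj F s (x * y) = (u * u' + v * v' * s\<^sup>2) - (u * v' + v * u') * s"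
    unfolding prod using uv square_mem
    by (intro quad_conj_coords subfield_add subfield_mult subfield_base)
  moreover have "quad_conj F s x = u - v * s" "quad_conj F s y = u' - v' * s"
    unfolding x y using uv by (simp_all add: quad_conj_coords)
  ultimately show "quad_conj F s (x + y) = quad_conj F s x + quad_conj F s y"
    "quad_conj F s (x * y) = quad_conj F s x * quad_conj F s y"
    by (simp_all only:) (simp_all add: algebra_simps power2_eq_square)
qed

lemma quad_conj_involution:
  assumes "x \<in> gen_field (insert s F)"
  shows "quad_conj F s x \<in> gen_field (insert s F) \<and> quad_conj F s (quad_conj F s x) = x"
proof -
  from assms obtain u v where uv: "u \<in> F" "v \<in> F" and x: "x = u + v * s"
    unfolding gen_field_insert_eq by blast
  have neg: "- v \<in> F"
    using uv by (simp add: subfield_uminus subfield_base)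
  have conj: "quad_conj F s x = u + (- v) * s"
    using uv by (simp add: x quad_conj_coords)
  show ?thesis
  proof
    show "quad_conj F s x \<in> gen_field (insert s F)"
      unfolding conj gen_field_insert_eq using uv(1) neg by blast
    show "quad_conj F s (quad_conj F s x) = x"
      unfolding conj using quad_conj_coords[OF uv(1) neg] by (simp add: x)
  qed
qed

lemma gal_nontrivial: "\<exists>\<sigma>\<in>gal (gen_field (insert s F)). \<exists>x\<in>gen_field (insert s F). \<sigma> x \<noteq> x"
proof -
  let ?L = "gen_field (insert s F)"
  have "quad_conj F s ` ?L = ?L"
  proof
    show "quad_conj F s ` ?L \<subseteq> ?L"
      using quad_conj_involution by blast
    show "?L \<subseteq> quad_conj F s ` ?L"
      using quad_conj_involution by (metis image_eqI subsetI)
  qed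
  then have gal: "restrict (quad_conj F s) ?L \<in> gal ?L"
    using field_emb_quad_conj unfolding gal_def embs_def by auto
  have s: "s \<in> ?L"
    using gen_field_subset by blast
  moreover have "quad_conj F s s = - s" "s \<noteq> 0"
    using quad_conj_coords[of 0 1] not_mem by (auto simp: subfield_zero subfield_one subfield_base)
  ultimately have "restrict (quad_conj F s) ?L s \<noteq> s"
    by simp
  then show ?thesis
    using gal s by (intro bexI)
qed

end

lemma quadratic_extension_Rats: "s\<^sup>2 \<in> \<rat> \<Longrightarrow> s \<notin> \<rat> \<Longrightarrow> quadratic_extension \<rat> s"
  by unfold_locales (simp_all add: subfield_Rats)

lemma gen_field_singleton: "gen_field {s} = gen_field (insert s \<rat>)"
  using gen_field_insert_gen_field[of s "{}"] by (simp add: gen_field_empty)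

lemma embs_gen_field_sqrt:
  assumes "s\<^sup>2 \<in> \<rat>" "s \<notin> \<rat>"
  shows "embs (gen_field {s}) =
    {restrict (\<lambda>x. x) (gen_field {s}), restrict (quad_conj \<rat> s) (gen_field {s})}"
proof -
  interpret quadratic_extension \<rat> s
    using assms by (rule quadratic_extension_Rats)
  let ?L = "gen_field {s}"
  have conj: "field_emb ?L (quad_conj \<rat> s)" "quad_conj \<rat> s s = - s"
    using field_emb_quad_conj quad_conj_coords[of 0 1] by (simp_all add: gen_field_singleton)
  have "restrict \<sigma> ?L \<in> {restrict (\<lambda>x. x) ?L, restrict (quad_conj \<rat> s) ?L}"
    if \<sigma>: "field_emb ?L \<sigma>" for \<sigma>
  proof -
    have "\<sigma> s = s \<or> \<sigma> s = - s"
      using field_emb_sqrt_Rats[OF subfield_gen_field \<sigma>] gen_field_subset assms(1) by blast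
    then show ?thesis
    proof
      assume "\<sigma> s = s"
      then have "\<forall>x\<in>?L. \<sigma> x = x"
        using field_emb_gen_field_eqI[OF \<sigma> field_emb_ident] by blast
      then show ?thesis
        by (auto simp: restrict_def fun_eq_iff)
    next
      assume "\<sigma> s = - s"
      then have "\<forall>x\<in>?L. \<sigma> x = quad_conj \<rat> s x"
        using field_emb_gen_field_eqI[OF \<sigma> conj(1)] conj(2) by auto
      then show ?thesis
        by (auto simp: restrict_def fun_eq_iff)
    qed
  qed
  then show ?thesis
    unfolding embs_def using field_emb_ident conj(1) by blast
qed

lemma field_norm_gen_field_sqrt:
  assumes "s\<^sup>2 \<in> \<rat>" "s \<notin> \<rat>" "u \<in> \<rat>" "v \<in> \<rat>"
  shows "field_norm (gen_field {s}) (u + v * s) = u\<^sup>2 - v\<^sup>2 * s\<^sup>2"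
proof -
  interpret quadratic_extension \<rat> s
    using assms(1,2) by (rule quadratic_extension_Rats)
  let ?L = "gen_field {s}"
  have "s \<in> ?L" "u + v * s \<in> ?L" "quad_conj \<rat> s s = - s" "s \<noteq> 0"
    using assms quad_conj_coords[of 0 1] gen_field_subset[of "{s}"]
    by (auto simp: gen_field_singleton gen_field_insert_eq)
  then have "restrict (\<lambda>x. x) ?L s \<noteq> restrict (quad_conj \<rat> s) ?L s"
    by simp
  then have "restrict (\<lambda>x. x) ?L \<noteq> restrict (quad_conj \<rat> s) ?L"
    by metis
  then have "field_norm ?L (u + v * s) = (u + v * s) * quad_conj \<rat> s (u + v * s)"
    unfolding field_norm_def embs_gen_field_sqrt[OF assms(1,2)]
    using \<open>u + v * s \<in> ?L\<close> by simp
  also have "\<dots> = u\<^sup>2 - v\<^sup>2 * s\<^sup>2"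
    unfolding quad_conj_coords[OF assms(3,4)] by (simp add: algebra_simps power2_eq_square)
  finally show ?thesis .
qed

lemma norm_minus_one_coords:
  assumes "s\<^sup>2 \<in> \<rat>" "s \<notin> \<rat>" "z \<in> gen_field {s}" "field_norm (gen_field {s}) z = -1"
  obtains x y where "x \<in> \<rat>" "y \<in> \<rat>" "z = x + y * s" "x\<^sup>2 - y\<^sup>2 * s\<^sup>2 = -1"
proof -
  interpret quadratic_extension \<rat> s
    using assms(1,2) by (rule quadratic_extension_Rats)
  obtain x y where xy: "x \<in> \<rat>" "y \<in> \<rat>" "z = x + y * s"
    using assms(3) by (auto simp: gen_field_singleton gen_field_insert_eq)
  moreover have "x\<^sup>2 - y\<^sup>2 * s\<^sup>2 = -1"
    using assms(4) field_norm_gen_field_sqrt[OF assms(1,2) xy(1,2)] by (simp add: xy(3))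
  ultimately show ?thesis
    using that by blast
qed

section \<open>Fields generated by square roots of rationals\<close>

context
  fixes S :: "complex set"
  assumes squares_Rats: "\<And>s. s \<in> S \<Longrightarrow> s\<^sup>2 \<in> \<rat>"
begin

lemma field_emb_gen_field_sqrts:
  assumes "field_emb (gen_field S) \<sigma>" "s \<in> S"
  shows "\<sigma> s = s \<or> \<sigma> s = - s"
  using field_emb_sqrt_Rats[OF subfield_gen_field assms(1)] gen_field_subset assms(2) squares_Rats
  by blast

lemma field_emb_gen_field_sqrts_image:
  assumes \<sigma>: "field_emb (gen_field S) \<sigma>"
  shows "\<sigma> ` gen_field S \<subseteq> gen_field S"
proof -
  have "S \<subseteq> {x \<in> gen_field S. \<sigma> x \<in> gen_field S}"
    using field_emb_gen_field_sqrts[OF \<sigma>] gen_field_subset[of S]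
      subfield_uminus[OF subfield_gen_field, of _ S] by fastforce
  then have "gen_field S \<subseteq> {x \<in> gen_field S. \<sigma> x \<in> gen_field S}"
    by (intro gen_field_least subfield_field_emb_preimage[OF subfield_gen_field \<sigma> subfield_gen_field])
  then show ?thesis
    by blast
qed

lemma finite_embs_gen_field_sqrts:
  assumes "finite S"
  shows "finite (embs (gen_field S))"
proof -
  have "inj_on (\<lambda>g. restrict g S) (embs (gen_field S))"
  proof (rule inj_onI)
    fix g h
    assume "g \<in> embs (gen_field S)" "h \<in> embs (gen_field S)" and eq: "restrict g S = restrict h S"
    then obtain \<sigma> \<tau> where \<sigma>: "field_emb (gen_field S) \<sigma>" "g = restrict \<sigma> (gen_field S)"
      and \<tau>: "field_emb (gen_field S) \<tau>" "h = restrict \<tau> (gen_field S)"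
      unfolding embs_def by blast
    have "\<sigma> s = \<tau> s" if "s \<in> S" for s
      using fun_cong[OF eq, of s] that gen_field_subset[of S] by (auto simp: \<sigma>(2) \<tau>(2))
    then show "g = h"
      using field_emb_gen_field_eqI[OF \<sigma>(1) \<tau>(1)] by (auto simp: \<sigma>(2) \<tau>(2))
  qed
  moreover have "(\<lambda>g. restrict g S) ` embs (gen_field S) \<subseteq> PiE S (\<lambda>s. {s, - s})"
  proof
    fix k
    assume "k \<in> (\<lambda>g. restrict g S) ` embs (gen_field S)"
    then obtain \<sigma> where \<sigma>: "field_emb (gen_field S) \<sigma>"
      and k: "k = restrict (restrict \<sigma> (gen_field S)) S"
      unfolding embs_def by blast
    have "k = restrict \<sigma> S"
      using gen_field_subset[of S] by (auto simp: k restrict_def fun_eq_iff)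
    then show "k \<in> PiE S (\<lambda>s. {s, - s})"
      using field_emb_gen_field_sqrts[OF \<sigma>] by auto
  qed
  moreover have "finite (PiE S (\<lambda>s. {s, - s}))"
    using assms by (simp add: finite_PiE)
  ultimately show ?thesis
    by (meson finite_imageD finite_subset)
qed

lemma galois_gen_field_sqrts: "finite S \<Longrightarrow> galois (gen_field S)"
  unfolding galois_def
  using subfield_gen_field finite_embs_gen_field_sqrts field_emb_gen_field_sqrts_image by blast

lemma gal_gen_field_sqrts_involution:
  assumes "\<sigma> \<in> gal (gen_field S)" "x \<in> gen_field S"
  shows "\<sigma> (\<sigma> x) = x"
proof -
  obtain \<sigma>\<^sub>0 where \<sigma>\<^sub>0: "field_emb (gen_field S) \<sigma>\<^sub>0" and \<sigma>: "\<sigma> = restrict \<sigma>\<^sub>0 (gen_field S)"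
    using assms(1) unfolding gal_def embs_def by blast
  note F = subfield_gen_field[of S]
  have maps: "\<sigma>\<^sub>0 y \<in> gen_field S" if "y \<in> gen_field S" for y
    using field_emb_gen_field_sqrts_image[OF \<sigma>\<^sub>0] that by blast
  have emb: "field_emb (gen_field S) (\<lambda>y. \<sigma>\<^sub>0 (\<sigma>\<^sub>0 y))"
    unfolding field_emb_def using maps F
    by (simp add: field_emb_one[OF F \<sigma>\<^sub>0] field_emb_add[OF F \<sigma>\<^sub>0] field_emb_mult[OF F \<sigma>\<^sub>0]
        subfield_add subfield_mult)
  have "\<sigma>\<^sub>0 (\<sigma>\<^sub>0 s) = s" if "s \<in> S" for s
    using field_emb_gen_field_sqrts[OF \<sigma>\<^sub>0 that] field_emb_uminus[OF F \<sigma>\<^sub>0, of s]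
      gen_field_subset[of S] that by auto
  then have "\<sigma>\<^sub>0 (\<sigma>\<^sub>0 x) = x"
    using field_emb_gen_field_eqI[OF emb field_emb_ident] assms(2) by simp
  then show ?thesis
    using maps assms(2) by (simp add: \<sigma>)
qed

text \<open>A maximal subset \<open>M \<subseteq> S\<close> generating a proper subfield exhibits \<open>gen_field S\<close> as a
  quadratic extension of \<open>gen_field M\<close>, whose conjugation is a nontrivial automorphism.\<close>

lemma gal_gen_field_sqrts_nontrivial:
  assumes "finite S" "\<not> S \<subseteq> \<rat>"
  shows "\<exists>\<sigma>\<in>gal (gen_field S). \<exists>x\<in>gen_field S. \<sigma> x \<noteq> x"
proof -
  define \<M> where "\<M> = {M. M \<subseteq> S \<and> gen_field M \<noteq> gen_field S}"
  have "gen_field {} \<noteq> gen_field S"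
    using assms(2) gen_field_subset[of S] by (auto simp: gen_field_empty)
  then have "{} \<in> \<M>"
    by (simp add: \<M>_def)
  moreover have "finite \<M>"
    using assms(1) by (simp add: \<M>_def)
  ultimately obtain M where M: "M \<in> \<M>" and max: "\<And>M'. M' \<in> \<M> \<Longrightarrow> M \<subseteq> M' \<Longrightarrow> M' = M"
    using finite_has_maximal2[of \<M> "{}"] by blast
  then have "M \<subseteq> S" "gen_field M \<noteq> gen_field S"
    by (simp_all add: \<M>_def)
  then have "M \<subset> S"
    by blast
  then obtain t where t: "t \<in> S" "t \<notin> M"
    using psubset_imp_ex_mem by blast
  have full: "gen_field (insert t M) = gen_field S"
  proof (rule ccontr)
    assume "gen_field (insert t M) \<noteq> gen_field S"
    then have "insert t M = M"
      using max[of "insert t M"] \<open>M \<subseteq> S\<close> t(1) by (auto simp: \<M>_def)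
    then show False
      using t(2) by blast
  qed
  have "t \<notin> gen_field M"
  proof
    assume "t \<in> gen_field M"
    then have "gen_field (insert t M) \<subseteq> gen_field M"
      using gen_field_subset[of M] by (intro gen_field_least subfield_gen_field) auto
    then show False
      using \<open>gen_field M \<noteq> gen_field S\<close> full gen_field_mono[of M "insert t M"] by auto
  qed
  moreover have "t\<^sup>2 \<in> gen_field M"
    using squares_Rats[OF t(1)] subfield_Rats_subset[OF subfield_gen_field] by blast
  ultimately interpret quadratic_extension "gen_field M" t
    by unfold_locales (rule subfield_gen_field)
  show ?thesis
    using gal_nontrivial full by (simp add: gen_field_insert_gen_field)
qed

lemma gal_exponent_two_gen_field_sqrts:
  "finite S \<Longrightarrow> \<not> S \<subseteq> \<rat> \<Longrightarrow> gal_exponent_two (gen_field S)"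
  unfolding gal_exponent_two_def
  using gal_gen_field_sqrts_involution gal_gen_field_sqrts_nontrivial by blast

end

section \<open>Biquadratic fields and units of norm \<open>-1\<close>\<close>

lemma rat_square_ne_irrational_square:
  assumes "c \<in> \<rat>" "d \<in> \<rat>" "d \<noteq> 0" "D \<notin> \<rat>"
  shows "c\<^sup>2 \<noteq> d\<^sup>2 * D\<^sup>2"
proof
  assume "c\<^sup>2 = d\<^sup>2 * D\<^sup>2"
  then have "(d * D)\<^sup>2 = c\<^sup>2"
    by (simp add: power_mult_distrib)
  then have "d * D = c \<or> d * D = - c"
    by (simp add: power2_eq_iff)
  then have "D = c / d \<or> D = - c / d"
    using assms(3) by (auto simp: field_simps)
  then show False
    using assms by auto
qed

lemma Rats_square_ne_minus_one:
  fixes x :: "'a :: field_char_0"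
  assumes "x \<in> \<rat>"
  shows "x\<^sup>2 \<noteq> -1"
proof -
  obtain r where x: "x = of_rat r"
    using assms by (auto elim: Rats_cases)
  have "r\<^sup>2 \<noteq> -1"
    using zero_le_power2[of r] by linarith
  then show ?thesis
    unfolding x by (metis of_rat_eq_iff of_rat_minus of_rat_1 of_rat_power)
qed

lemma norm_minus_one_coords_nonzero:
  fixes x y D :: "'a :: field_char_0"
  assumes "x \<in> \<rat>" "y \<in> \<rat>" "D \<notin> \<rat>" and norm: "x\<^sup>2 - y\<^sup>2 * D\<^sup>2 = -1"
  shows "x \<noteq> 0" "y \<noteq> 0"
proof -
  show "y \<noteq> 0"
  proof
    assume "y = 0"
    then have "x\<^sup>2 = -1"
      using norm by simp
    then show False
      using Rats_square_ne_minus_one assms(1) by blast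
  qed
  show "x \<noteq> 0"
  proof
    assume "x = 0"
    then have "1\<^sup>2 = y\<^sup>2 * D\<^sup>2"
      using norm by simp
    then show False
      using rat_square_ne_irrational_square[of 1 y D] assms(2,3) \<open>y \<noteq> 0\<close> by simp
  qed
qed

lemma sqrts_mem_of_lincomb_mem:
  assumes F: "subfield F" and P: "P\<^sup>2 \<in> \<rat>" and Q: "Q\<^sup>2 \<in> \<rat>" and PQ: "P * Q \<notin> \<rat>"
    and \<alpha>: "\<alpha> \<in> \<rat>" "\<alpha> \<noteq> 0" and \<beta>: "\<beta> \<in> \<rat>" "\<beta> \<noteq> 0" and y: "\<alpha> * P + \<beta> * Q \<in> F"
  shows "P \<in> F \<and> Q \<in> F"
proof -
  note Rats_F = subsetD[OF subfield_Rats_subset[OF F]]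
  define y where "y = \<alpha> * P + \<beta> * Q"
  define d where "d = \<alpha>\<^sup>2 * P\<^sup>2 - \<beta>\<^sup>2 * Q\<^sup>2"
  have yF: "y \<in> F"
    using y by (simp add: y_def)
  have "y\<^sup>2 = (\<alpha>\<^sup>2 * P\<^sup>2 + \<beta>\<^sup>2 * Q\<^sup>2) + 2 * \<alpha> * \<beta> * (P * Q)"
    by (simp add: y_def algebra_simps power2_eq_square)
  then have "P * Q = (y\<^sup>2 - (\<alpha>\<^sup>2 * P\<^sup>2 + \<beta>\<^sup>2 * Q\<^sup>2)) / (2 * \<alpha> * \<beta>)"
    using \<alpha> \<beta> by (simp add: field_simps)
  moreover have "\<alpha>\<^sup>2 * P\<^sup>2 + \<beta>\<^sup>2 * Q\<^sup>2 \<in> F" "2 * \<alpha> * \<beta> \<in> F"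
    using \<alpha> \<beta> P Q by (simp_all add: Rats_F)
  ultimately have PQ_F: "P * Q \<in> F"
    using yF F by (simp add: subfield_divide subfield_diff subfield_power)
  have "d \<noteq> 0"
  proof
    assume "d = 0"
    then have "(\<alpha> * P\<^sup>2)\<^sup>2 = \<beta>\<^sup>2 * (P * Q)\<^sup>2"
      unfolding d_def by algebra
    then show False
      using rat_square_ne_irrational_square[of "\<alpha> * P\<^sup>2" \<beta> "P * Q"] \<alpha> \<beta> P PQ by simp
  qed
  moreover have "(\<alpha> * P\<^sup>2 - \<beta> * (P * Q)) * y = d * P"
    by (simp add: y_def d_def algebra_simps power2_eq_square)
  ultimately have P_eq: "P = (\<alpha> * P\<^sup>2 - \<beta> * (P * Q)) * y / d"
    by simp
  have "d \<in> F" "\<alpha> * P\<^sup>2 \<in> F" "\<beta> \<in> F" "\<alpha> \<in> F"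
    using \<alpha> \<beta> P Q by (simp_all add: d_def Rats_F)
  then have PF: "P \<in> F"
    using F PQ_F yF by (subst P_eq) (simp add: subfield_diff subfield_mult subfield_divide)
  have "Q = (y - \<alpha> * P) / \<beta>"
    using \<beta> by (simp add: y_def)
  then have "Q \<in> F"
    using F PF yF \<open>\<alpha> \<in> F\<close> \<open>\<beta> \<in> F\<close> by (simp add: subfield_diff subfield_mult subfield_divide)
  then show ?thesis
    using PF by blast
qed

locale biquadratic =
  fixes A B :: complex
  assumes A_square: "A\<^sup>2 \<in> \<rat>" and B_square: "B\<^sup>2 \<in> \<rat>"
    and A_irrational: "A \<notin> \<rat>" and B_irrational: "B \<notin> \<rat>" and AB_irrational: "A * B \<notin> \<rat>"
begin

lemma AB_square: "(A * B)\<^sup>2 \<in> \<rat>"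
  using A_square B_square by (simp add: power_mult_distrib)

lemma generators_mem_of_lincomb_mem:
  assumes F: "subfield F" and c: "c1 \<in> \<rat>" "c2 \<in> \<rat>" "c3 \<in> \<rat>"
    and two_nonzero: "\<not> (c1 = 0 \<and> c2 = 0)" "\<not> (c1 = 0 \<and> c3 = 0)" "\<not> (c2 = 0 \<and> c3 = 0)"
    and y: "c1 * A + c2 * B + c3 * (A * B) \<in> F"
  shows "A \<in> F \<and> B \<in> F"
proof -
  note Rats_F = subsetD[OF subfield_Rats_subset[OF F]]
  have A0: "A \<noteq> 0" and B0: "B \<noteq> 0"
    using A_irrational B_irrational by auto
  have from_AB: "A \<in> F \<and> B \<in> F"
    if "d1 \<in> \<rat>" "d1 \<noteq> 0" "d2 \<in> \<rat>" "d2 \<noteq> 0" "d1 * A + d2 * B \<in> F" for d1 d2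
    using sqrts_mem_of_lincomb_mem[OF F A_square B_square AB_irrational that] .
  consider "c3 = 0" | "c1 = 0" | "c2 = 0" | "c1 \<noteq> 0" "c2 \<noteq> 0" "c3 \<noteq> 0"
    by blast
  then show ?thesis
  proof cases
    case 1
    then show ?thesis
      using from_AB[of c1 c2] c two_nonzero y by simp
  next
    case 2
    have "B * (A * B) / B\<^sup>2 = A"
      using B0 by (simp add: power2_eq_square)
    then have "B * (A * B) \<notin> \<rat>"
      using A_irrational B_square by (metis Rats_divide)
    then have "B \<in> F \<and> A * B \<in> F"
      using sqrts_mem_of_lincomb_mem[OF F B_square AB_square _ c(2) _ c(3)] 2 two_nonzero y by simp
    moreover have "A = (A * B) / B"
      using B0 by simp
    ultimately show ?thesis
      using F by (metis subfield_divide)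
  next
    case 3
    have "A * (A * B) / A\<^sup>2 = B"
      using A0 by (simp add: power2_eq_square)
    then have "A * (A * B) \<notin> \<rat>"
      using B_irrational A_square by (metis Rats_divide)
    then have "A \<in> F \<and> A * B \<in> F"
      using sqrts_mem_of_lincomb_mem[OF F A_square AB_square _ c(1) _ c(3)] 3 two_nonzero y by simp
    moreover have "B = (A * B) / A"
      using A0 by simp
    ultimately show ?thesis
      using F by (metis subfield_divide)
  next
    case 4
    define y where "y = c1 * A + c2 * B + c3 * (A * B)"
    define z where "z = c1 * c2 * (A * B) + c1 * c3 * A\<^sup>2 * B + c2 * c3 * B\<^sup>2 * A"
    define q where "q = c1\<^sup>2 * A\<^sup>2 + c2\<^sup>2 * B\<^sup>2 + c3\<^sup>2 * (A\<^sup>2 * B\<^sup>2)"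
    have "y\<^sup>2 = q + 2 * z"
      by (simp add: y_def z_def q_def algebra_simps power2_eq_square)
    then have z: "z = (y\<^sup>2 - q) / 2"
      by simp
    have "y \<in> F" "q \<in> F" "2 \<in> F"
      using y c A_square B_square by (simp_all add: y_def q_def Rats_F)
    then have "z \<in> F"
      unfolding z using F by (intro subfield_diff subfield_divide subfield_power)
    then have "c1 * c2 * y - c3 * z \<in> F"
      using \<open>y \<in> F\<close> c F by (simp add: Rats_F subfield_diff subfield_mult)
    moreover have "c1 * c2 * y - c3 * z = (c2 * (c1\<^sup>2 - c3\<^sup>2 * B\<^sup>2)) * A + (c1 * (c2\<^sup>2 - c3\<^sup>2 * A\<^sup>2)) * B"
      by (simp add: y_def z_def algebra_simps power2_eq_square)
    moreover have "c1\<^sup>2 \<noteq> c3\<^sup>2 * B\<^sup>2" "c2\<^sup>2 \<noteq> c3\<^sup>2 * A\<^sup>2"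
      using rat_square_ne_irrational_square c 4 A_irrational B_irrational by auto
    ultimately show ?thesis
      using from_AB[of "c2 * (c1\<^sup>2 - c3\<^sup>2 * B\<^sup>2)" "c1 * (c2\<^sup>2 - c3\<^sup>2 * A\<^sup>2)"] c 4 A_square B_square
      by simp
  qed
qed

end

lemma of_real_of_rat: "complex_of_real (of_rat r) = of_rat r"
  by (cases r) (simp add: of_rat_rat)

locale norm_minus_one_units = biquadratic +
  fixes x1 y1 x2 y2 x3 y3 :: complex
  assumes coords_Rats: "x1 \<in> \<rat>" "y1 \<in> \<rat>" "x2 \<in> \<rat>" "y2 \<in> \<rat>" "x3 \<in> \<rat>" "y3 \<in> \<rat>"
    and norm1: "x1\<^sup>2 - y1\<^sup>2 * A\<^sup>2 = -1"
    and norm2: "x2\<^sup>2 - y2\<^sup>2 * B\<^sup>2 = -1"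
    and norm3: "x3\<^sup>2 - y3\<^sup>2 * (A * B)\<^sup>2 = -1"
begin

abbreviation "e1 \<equiv> x1 + y1 * A"
abbreviation "e2 \<equiv> x2 + y2 * B"
abbreviation "e3 \<equiv> x3 + y3 * (A * B)"

abbreviation "coeff_1 \<equiv> x1 * x2 * x3 + A\<^sup>2 * B\<^sup>2 * (y1 * y2 * y3)"
abbreviation "coeff_A \<equiv> y1 * x2 * x3 + B\<^sup>2 * (x1 * y2 * y3)"
abbreviation "coeff_B \<equiv> x1 * y2 * x3 + A\<^sup>2 * (y1 * x2 * y3)"
abbreviation "coeff_AB \<equiv> x1 * x2 * y3 + y1 * y2 * x3"

lemma unit_product_expansion:
  "e1 * e2 * e3 = coeff_1 + (coeff_A * A + coeff_B * B + coeff_AB * (A * B))"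
  by (simp add: algebra_simps power2_eq_square)

lemma coeffs_Rats: "coeff_1 \<in> \<rat>" "coeff_A \<in> \<rat>" "coeff_B \<in> \<rat>" "coeff_AB \<in> \<rat>"
  using coords_Rats A_square B_square by simp_all

lemma coeffs_two_nonzero:
  "\<not> (coeff_A = 0 \<and> coeff_B = 0)" "\<not> (coeff_A = 0 \<and> coeff_AB = 0)" "\<not> (coeff_B = 0 \<and> coeff_AB = 0)"
proof -
  note nz1 = norm_minus_one_coords_nonzero[OF coords_Rats(1,2) A_irrational norm1]
  note nz2 = norm_minus_one_coords_nonzero[OF coords_Rats(3,4) B_irrational norm2]
  note nz3 = norm_minus_one_coords_nonzero[OF coords_Rats(5,6) AB_irrational norm3]
  show "\<not> (coeff_A = 0 \<and> coeff_B = 0)"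
  proof
    assume "coeff_A = 0 \<and> coeff_B = 0"
    then have "x3 * ((A\<^sup>2 * y1)\<^sup>2 - y2\<^sup>2 * (A * B)\<^sup>2) = 0"
      using norm1 norm2 by algebra
    then show False
      using rat_square_ne_irrational_square[of "A\<^sup>2 * y1" y2 "A * B"] coords_Rats A_square nz2 nz3
        AB_irrational by simp
  qed
  show "\<not> (coeff_A = 0 \<and> coeff_AB = 0)"
  proof
    assume "coeff_A = 0 \<and> coeff_AB = 0"
    then have "x2 * (y1\<^sup>2 - y3\<^sup>2 * B\<^sup>2) = 0"
      using norm1 norm3 by algebra
    then show False
      using rat_square_ne_irrational_square[of y1 y3 B] coords_Rats nz2 nz3 B_irrational by simp
  qed
  show "\<not> (coeff_B = 0 \<and> coeff_AB = 0)"
  proof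
    assume "coeff_B = 0 \<and> coeff_AB = 0"
    then have "x1 * (y2\<^sup>2 - y3\<^sup>2 * A\<^sup>2) = 0"
      using norm2 norm3 by algebra
    then show False
      using rat_square_ne_irrational_square[of y2 y3 A] coords_Rats nz1 nz3 A_irrational by simp
  qed
qed

lemma units_mem_gen_field: "e1 \<in> gen_field {A, B}" "e2 \<in> gen_field {A, B}" "e3 \<in> gen_field {A, B}"
proof -
  note F = subfield_gen_field[of "{A, B}"]
  have "A \<in> gen_field {A, B}" "B \<in> gen_field {A, B}" "\<rat> \<subseteq> gen_field {A, B}"
    using gen_field_subset subfield_Rats_subset[OF F] by blast+
  then show "e1 \<in> gen_field {A, B}" "e2 \<in> gen_field {A, B}" "e3 \<in> gen_field {A, B}"
    using coords_Rats F by (auto intro!: subfield_add subfield_mult)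
qed

lemma gen_field_unit_product: "gen_field {e1 * e2 * e3} = gen_field {A, B}"
proof (rule subset_antisym)
  show "gen_field {e1 * e2 * e3} \<subseteq> gen_field {A, B}"
    using units_mem_gen_field subfield_gen_field
    by (intro gen_field_least subfield_gen_field) (simp add: subfield_mult)
  let ?F = "gen_field {e1 * e2 * e3}"
  have "e1 * e2 * e3 \<in> ?F" "coeff_1 \<in> ?F"
    using gen_field_subset subfield_Rats_subset[OF subfield_gen_field] coeffs_Rats(1) by blast+
  then have "e1 * e2 * e3 - coeff_1 \<in> ?F"
    by (intro subfield_diff subfield_gen_field)
  moreover have "e1 * e2 * e3 - coeff_1 = coeff_A * A + coeff_B * B + coeff_AB * (A * B)"
    by (subst unit_product_expansion) simp
  ultimately have "A \<in> ?F \<and> B \<in> ?F"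
    using generators_mem_of_lincomb_mem[OF subfield_gen_field coeffs_Rats(2-4) coeffs_two_nonzero]
    by simp
  then show "gen_field {A, B} \<subseteq> ?F"
    by (intro gen_field_least subfield_gen_field) auto
qed

text \<open>As \<open>e\<^sub>i e\<^sub>i' = -1\<close>, each product \<open>e\<^sub>i e\<^sub>j\<close> is \<open>-\<eta>\<close> times the conjugate of the third unit;
  with signs of product \<open>-1\<close> the cross terms of the square therefore combine into \<open>\<eta>\<close> times
  a sum of traces.\<close>

lemma unit_combination_square:
  "(e1 * e2 * e3 + e1 + e2 - e3)\<^sup>2 = 4 * (coeff_1 + x1 + x2 - x3) * (e1 * e2 * e3)"
  using norm1 norm2 norm3 by algebra

lemma unit_combination_square_real:
  fixes \<epsilon>1 \<epsilon>2 \<epsilon>3 :: real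
  assumes "complex_of_real \<epsilon>1 = e1" "complex_of_real \<epsilon>2 = e2" "complex_of_real \<epsilon>3 = e3"
  obtains r :: rat where "(\<epsilon>1 * \<epsilon>2 * \<epsilon>3 + \<epsilon>1 + \<epsilon>2 - \<epsilon>3)\<^sup>2 = of_rat r * (\<epsilon>1 * \<epsilon>2 * \<epsilon>3)"
proof -
  have "4 * (coeff_1 + x1 + x2 - x3) \<in> \<rat>"
    using coords_Rats A_square B_square by simp
  then obtain r where r: "of_rat r = 4 * (coeff_1 + x1 + x2 - x3)"
    by (elim Rats_cases) simp
  have "complex_of_real ((\<epsilon>1 * \<epsilon>2 * \<epsilon>3 + \<epsilon>1 + \<epsilon>2 - \<epsilon>3)\<^sup>2) =
      complex_of_real (of_rat r * (\<epsilon>1 * \<epsilon>2 * \<epsilon>3))"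
    using unit_combination_square by (simp add: assms r of_real_of_rat)
  then show ?thesis
    using that by (simp only: of_real_eq_iff)
qed

end

lemma sqrt_of_int_notin_Rats:
  fixes n :: int
  assumes "n \<ge> 0" "\<not> (\<exists>m. n = m\<^sup>2)"
  shows "sqrt (of_int n) \<notin> \<rat>"
proof
  assume "sqrt (of_int n) \<in> \<rat>"
  then have "sqrt (of_int n) \<in> \<int>"
    by (intro rational_algebraic_int_is_int) auto
  then obtain m where "sqrt (of_int n) = of_int m"
    by (elim Ints_cases)
  then have "of_int n = (of_int m :: real)\<^sup>2"
    using assms(1) by (metis of_int_0_le_iff real_sqrt_pow2)
  then show False
    using assms(2) by (metis of_int_eq_iff of_int_power)
qed

lemma biquadratic_sqrt_of_int:
  fixes a b :: int
  assumes "a > 0" "b > 0"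
    and "\<not> (\<exists>n. a = n\<^sup>2)" "\<not> (\<exists>n. b = n\<^sup>2)" "\<not> (\<exists>n. a * b = n\<^sup>2)"
  shows "biquadratic (complex_of_real (sqrt (of_int a))) (complex_of_real (sqrt (of_int b)))"
proof
  show "(complex_of_real (sqrt (of_int a)))\<^sup>2 \<in> \<rat>" "(complex_of_real (sqrt (of_int b)))\<^sup>2 \<in> \<rat>"
    using assms(1,2) by (simp_all flip: of_real_power)
  show "complex_of_real (sqrt (of_int a)) \<notin> \<rat>" "complex_of_real (sqrt (of_int b)) \<notin> \<rat>"
    using assms(1-4) by (simp_all add: sqrt_of_int_notin_Rats)
  have "sqrt (of_int (a * b)) \<notin> \<rat>"
    using assms(1,2,5) sqrt_of_int_notin_Rats[of "a * b"] by simp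
  then show "complex_of_real (sqrt (of_int a)) * complex_of_real (sqrt (of_int b)) \<notin> \<rat>"
    by (simp add: real_sqrt_mult flip: of_real_mult)
qed

lemma fundamental_unit_norm_minus_one_coords:
  assumes "s\<^sup>2 \<in> \<rat>" "s \<notin> \<rat>" "fundamental_unit (gen_field {s}) \<epsilon>"
    "field_norm (gen_field {s}) (complex_of_real \<epsilon>) = -1"
  obtains x y where "x \<in> \<rat>" "y \<in> \<rat>" "complex_of_real \<epsilon> = x + y * s" "x\<^sup>2 - y\<^sup>2 * s\<^sup>2 = -1"
  using norm_minus_one_coords[OF assms(1,2) _ assms(4)] assms(3)
  by (auto simp: fundamental_unit_def real_unit_of_def)

lemma gen_field_insert_sqrt_eq_csqrt:
  fixes \<eta> \<rho> :: real
  assumes K: "subfield K" and \<rho>K: "complex_of_real \<rho> \<in> K"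
    and pos: "\<eta> > 0" "\<rho> > 0" and \<rho>_sq: "\<rho>\<^sup>2 = of_rat r * \<eta>"
  shows "gen_field (insert (complex_of_real (sqrt \<eta>)) K) = gen_field (insert (csqrt (of_rat r)) K)"
proof -
  have r: "real_of_rat r = \<rho>\<^sup>2 / \<eta>"
    using \<rho>_sq pos by (simp add: field_simps)
  then have "csqrt (of_rat r) = complex_of_real (sqrt (of_rat r))"
    using pos by (simp flip: of_real_of_rat)
  moreover have "sqrt \<eta> * sqrt (of_rat r) = \<rho>"
    using r pos by (simp flip: real_sqrt_mult)
  ultimately have "complex_of_real (sqrt \<eta>) * csqrt (of_rat r) = complex_of_real \<rho>"
    by (metis of_real_mult)
  then show ?thesis
    using gen_field_insert_eq_if_mult_mem[OF K, of "complex_of_real (sqrt \<eta>)" "csqrt (of_rat r)"]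
      \<rho>K pos by simp
qed

lemma sqrt_of_multiquadratic_generator:
  fixes \<eta> \<rho> :: real and S :: "complex set"
  assumes S: "finite S" "\<And>s. s \<in> S \<Longrightarrow> s\<^sup>2 \<in> \<rat>" "\<not> S \<subseteq> \<rat>"
    and gen: "gen_field {complex_of_real \<eta>} = gen_field S"
    and \<rho>K: "complex_of_real \<rho> \<in> gen_field S"
    and pos: "\<eta> > 0" "\<rho> > 0" and \<rho>_sq: "\<rho>\<^sup>2 = of_rat r * \<eta>"
  shows "galois (gen_field {complex_of_real (sqrt \<eta>)}) \<and>
    gal_exponent_two (gen_field {complex_of_real (sqrt \<eta>)}) \<and>
    r \<noteq> 0 \<and>
    gen_field (insert (complex_of_real (sqrt \<eta>)) (gen_field S)) =
      gen_field (insert (csqrt (of_rat r)) (gen_field S)) \<and>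
    (let \<rho>' = csqrt (of_rat r * complex_of_real \<eta>)
     in \<rho>' \<in> gen_field S \<and> complex_of_real \<eta> = \<rho>' ^ 2 / of_rat r)"
proof -
  have swap: "gen_field (insert (complex_of_real (sqrt \<eta>)) (gen_field S)) =
      gen_field (insert (csqrt (of_rat r)) (gen_field S))"
    using gen_field_insert_sqrt_eq_csqrt[OF subfield_gen_field \<rho>K pos \<rho>_sq] .
  have "gen_field {complex_of_real (sqrt \<eta>)} =
      gen_field (insert (complex_of_real (sqrt \<eta>)) (gen_field S))"
    using gen_field_insert_power[of "complex_of_real (sqrt \<eta>)" 2] gen pos
    by (simp flip: of_real_power)
  also have "\<dots> = gen_field (insert (csqrt (of_rat r)) S)"
    using swap by (simp add: gen_field_insert_gen_field)
  finally have sqrt_gen: "gen_field {complex_of_real (sqrt \<eta>)} = gen_field (insert (csqrt (of_rat r)) S)" .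
  have S': "finite (insert (csqrt (of_rat r)) S)" "\<not> insert (csqrt (of_rat r)) S \<subseteq> \<rat>"
    "\<And>s. s \<in> insert (csqrt (of_rat r)) S \<Longrightarrow> s\<^sup>2 \<in> \<rat>"
    using S by auto
  have "r \<noteq> 0"
    using \<rho>_sq pos by auto
  moreover have "of_rat r * complex_of_real \<eta> = (complex_of_real \<rho>)\<^sup>2"
    by (simp add: \<rho>_sq flip: of_real_of_rat of_real_power)
  moreover from calculation have "complex_of_real \<eta> = (complex_of_real \<rho>)\<^sup>2 / of_rat r"
    by (metis nonzero_mult_div_cancel_left of_rat_eq_0_iff)
  ultimately show ?thesis
    using galois_gen_field_sqrts[OF S'(3,1)] gal_exponent_two_gen_field_sqrts[OF S'(3,1,2)]
      sqrt_gen swap pos \<rho>K by (simp add: Let_def)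
qed

theorem mainTheorem4:
  fixes a b :: int and \<epsilon>1 \<epsilon>2 \<epsilon>3 :: real
  assumes "a > 0" and "b > 0"
    and "\<not> (\<exists>n::int. a = n ^ 2)" and "\<not> (\<exists>n::int. b = n ^ 2)" and "\<not> (\<exists>n::int. a * b = n ^ 2)"
  defines "K \<equiv> gen_field {complex_of_real (sqrt (real_of_int a)), complex_of_real (sqrt (real_of_int b))}"
    and "k1 \<equiv> gen_field {complex_of_real (sqrt (real_of_int a))}"
    and "k2 \<equiv> gen_field {complex_of_real (sqrt (real_of_int b))}"
    and "k3 \<equiv> gen_field {complex_of_real (sqrt (real_of_int (a * b)))}"
  assumes "fundamental_unit k1 \<epsilon>1" and "fundamental_unit k2 \<epsilon>2" and "fundamental_unit k3 \<epsilon>3"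
    and "field_norm k1 (complex_of_real \<epsilon>1) = -1"
    and "field_norm k2 (complex_of_real \<epsilon>2) = -1"
    and "field_norm k3 (complex_of_real \<epsilon>3) = -1"
  defines "\<eta> \<equiv> \<epsilon>1 * \<epsilon>2 * \<epsilon>3"
  shows "gen_field {complex_of_real \<eta>} = K \<and>
    galois (gen_field {complex_of_real (sqrt \<eta>)}) \<and>
    gal_exponent_two (gen_field {complex_of_real (sqrt \<eta>)}) \<and>
    (\<exists>r::rat. r \<noteq> 0 \<and>
           gen_field (insert (complex_of_real (sqrt \<eta>)) K) = gen_field (insert (csqrt (of_rat r)) K) \<and>
           (let \<rho> = csqrt (of_rat r * complex_of_real \<eta>)
            in \<rho> \<in> K \<and> complex_of_real \<eta> = \<rho> ^ 2 / of_rat r))"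
proof -
  define A B where "A = complex_of_real (sqrt (real_of_int a))"
    and "B = complex_of_real (sqrt (real_of_int b))"
  interpret biquadratic A B
    unfolding A_def B_def using assms(1-5) by (rule biquadratic_sqrt_of_int)
  have K: "K = gen_field {A, B}" and k: "k1 = gen_field {A}" "k2 = gen_field {B}" "k3 = gen_field {A * B}"
    by (simp_all add: K_def k1_def k2_def k3_def A_def B_def real_sqrt_mult)
  obtain x1 y1 where u1: "x1 \<in> \<rat>" "y1 \<in> \<rat>" "complex_of_real \<epsilon>1 = x1 + y1 * A" "x1\<^sup>2 - y1\<^sup>2 * A\<^sup>2 = -1"
    using fundamental_unit_norm_minus_one_coords[OF A_square A_irrational] assms(10,13) unfolding k .
  obtain x2 y2 where u2: "x2 \<in> \<rat>" "y2 \<in> \<rat>" "complex_of_real \<epsilon>2 = x2 + y2 * B" "x2\<^sup>2 - y2\<^sup>2 * B\<^sup>2 = -1"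
    using fundamental_unit_norm_minus_one_coords[OF B_square B_irrational] assms(11,14) unfolding k .
  obtain x3 y3 where u3: "x3 \<in> \<rat>" "y3 \<in> \<rat>" "complex_of_real \<epsilon>3 = x3 + y3 * (A * B)"
    "x3\<^sup>2 - y3\<^sup>2 * (A * B)\<^sup>2 = -1"
    using fundamental_unit_norm_minus_one_coords[OF AB_square AB_irrational] assms(12,15) unfolding k .
  interpret norm_minus_one_units A B x1 y1 x2 y2 x3 y3
    using u1 u2 u3 by unfold_locales
  define \<rho> where "\<rho> = \<eta> + \<epsilon>1 + \<epsilon>2 - \<epsilon>3"
  have gen: "gen_field {complex_of_real \<eta>} = gen_field {A, B}"
    using gen_field_unit_product by (simp add: \<eta>_def u1(3) u2(3) u3(3))
  have \<rho>K: "complex_of_real \<rho> \<in> gen_field {A, B}"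
    using units_mem_gen_field subfield_gen_field
    by (simp add: \<rho>_def \<eta>_def u1(3) u2(3) u3(3) subfield_add subfield_diff subfield_mult)
  obtain r where \<rho>_sq: "\<rho>\<^sup>2 = of_rat r * \<eta>"
    unfolding \<rho>_def \<eta>_def by (rule unit_combination_square_real[OF u1(3) u2(3) u3(3)])
  have \<epsilon>: "\<epsilon>1 > 1" "\<epsilon>2 > 1" "\<epsilon>3 > 1"
    using assms(10-12) by (simp_all add: fundamental_unit_def)
  then have "1 * \<epsilon>3 < (\<epsilon>1 * \<epsilon>2) * \<epsilon>3"
    by (intro mult_strict_right_mono less_1_mult) auto
  then have pos: "\<eta> > 0" "\<rho> > 0"
    unfolding \<rho>_def \<eta>_def using \<epsilon> by linarith+
  have "finite {A, B}" "\<And>s. s \<in> {A, B} \<Longrightarrow> s\<^sup>2 \<in> \<rat>" "\<not> {A, B} \<subseteq> \<rat>"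
    using A_square B_square A_irrational by auto
  from sqrt_of_multiquadratic_generator[OF this gen \<rho>K pos \<rho>_sq] gen show ?thesis
    unfolding K by blast
qed

end
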